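(* Let $H\in\mathrm{C}(\mathbb{R}\times\mathbb{R})$ satisfy $\lim_{p\to\pm\infty}H(p,x)=\infty$ uniformly in $x\in\mathbb{R}$, let $x\mapsto H(p,x)$ be $1$-periodic for every $p$, and assume $H\in\mathrm{Lip}([-B,B]\times\mathbb{R})$ for every $B>0$. Then for each $\theta\in\mathbb{R}$ there exist a unique $\overline{H}(\theta)\in\mathbb{R}$ and a $1$-periodic $F_\theta\in\mathrm{C}^2(\mathbb{R})$ such that $$F_\theta''(x)+H(\theta+F_\theta'(x),x)=\overline{H}(\theta)\quad\text{for all }x\in\mathbb{R},$$ and moreover $p_-(\theta)\le\theta+F_\theta'(x)\le p_+(\theta)$ for all $x\in\mathbb{R}$.
   Context: For $\theta\in\mathbb{R}$, $U(\theta)=\max\{H(\theta,x):\,x\in[0,1]\}$, $p_-(\theta)=\min_{x\in[0,1]}\min\{p\in\mathbb{R}:\,H(p,x)\le U(\theta)\}$ and $p_+(\theta)=\max_{x\in[0,1]}\max\{p\in\mathbb{R}:\,H(p,x)\le U(\theta)\}$. Uniqueness of $\overline{H}(\theta)$ means: it is the only real number for which such a $1$-periodic $\mathrm{C}^2$ function exists. *)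

theory Defs
  imports "HOL-Analysis.Analysis"
begin

text \<open>The max/min over x in [0,1] and over p are attained (continuity, coercivity), so they are rendered via Sup/Inf (Max/Min in Isabelle are only for finite sets).\<close>

definition U_max :: "(real \<Rightarrow> real \<Rightarrow> real) \<Rightarrow> real \<Rightarrow> real" where
  "U_max H \<theta> = Sup ((\<lambda>x. H \<theta> x) ` {0..1})"

definition p_minus :: "(real \<Rightarrow> real \<Rightarrow> real) \<Rightarrow> real \<Rightarrow> real" where
  "p_minus H \<theta> = Inf ((\<lambda>x. Inf {p. H p x \<le> U_max H \<theta>}) ` {0..1})"

definition p_plus :: "(real \<Rightarrow> real \<Rightarrow> real) \<Rightarrow> real \<Rightarrow> real" where
  "p_plus H \<theta> = Sup ((\<lambda>x. Sup {p. H p x \<le> U_max H \<theta>}) ` {0..1})"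

definition periodic_C2 :: "(real \<Rightarrow> real) \<Rightarrow> (real \<Rightarrow> real) \<Rightarrow> (real \<Rightarrow> real) \<Rightarrow> bool" where
  "periodic_C2 F F1 F2 \<longleftrightarrow>
     (\<forall>x. F (x + 1) = F x) \<and>
     (\<forall>x. (F has_real_derivative F1 x) (at x)) \<and>
     (\<forall>x. (F1 has_real_derivative F2 x) (at x)) \<and>
     continuous_on UNIV F2"

end

theory Submission
  imports Defs "HOL-Library.Periodic_Fun"
begin

(* Write v = \<theta> + F'. The cell problem is the first-order equation v' = c - H(v, x) for a
   1-periodic v with mean \<theta>; F is then the antiderivative of v - \<theta>. Truncating H outside
   a large momentum interval makes the field bounded and globally Lipschitz, so the equation
   has a unique trajectory for every constant c and initial value \<xi>. Trajectories increase
   strictly with c, hence for each \<xi> exactly one c closes the orbit (v(1) = \<xi>); this c depends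
   continuously on \<xi>, and the intermediate value theorem gives a \<xi> whose closed orbit has
   mean \<theta>. ODE uniqueness makes the closed orbit 1-periodic.
   Everything else is a maximum principle: a periodic C2 function has a critical point where
   F'' \<le> 0. Applied to the difference of two solutions it gives uniqueness of c; applied at the
   extrema of \<theta> + F' it shows that H(\<theta> + F', x) = c \<le> U(\<theta>) there, so by coercivity the
   truncation is never active and \<theta> + F' stays between p_-(\<theta>) and p_+(\<theta>). *)

section \<open>Calculus on the real line\<close>

lemma last_zero_before_negative:
  fixes w :: "real \<Rightarrow> real"
  assumes "a \<le> s" and cont: "continuous_on {a..s} w" and "0 \<le> w a" "w s < 0"
  obtains z where "z \<in> {a..<s}" "w z = 0" "\<And>y. y \<in> {z<..s} \<Longrightarrow> w y < 0"
proof -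
  define Z where "Z = {t \<in> {a..s}. w t = 0}"
  have "compact Z"
    unfolding Z_def compact_eq_bounded_closed
    by (intro conjI continuous_closed_preimage_constant cont)
       (auto intro: bounded_subset[OF bounded_closed_interval])
  moreover have "Z \<noteq> {}"
  proof -
    obtain x where "a \<le> x" "x \<le> s" "w x = 0"
      using IVT2'[of w s 0 a] assms \<open>a \<le> s\<close> by auto
    then show ?thesis by (auto simp: Z_def)
  qed
  ultimately obtain z where "z \<in> Z" and z_max: "\<And>y. y \<in> Z \<Longrightarrow> y \<le> z"
    by (meson compact_attains_sup)
  then have z: "z \<in> {a..s}" "w z = 0" by (auto simp: Z_def)
  show thesis
  proof (rule that)
    show "z \<in> {a..<s}" using z \<open>w s < 0\<close> by (cases "z = s") auto
    show "w z = 0" by (rule z)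
    fix y assume y: "y \<in> {z<..s}"
    show "w y < 0"
    proof (rule ccontr)
      assume "\<not> w y < 0"
      then obtain x where "y \<le> x" "x \<le> s" "w x = 0"
        using IVT2'[of w s 0 y] y z \<open>w s < 0\<close> continuous_on_subset[OF cont] by force
      then show False using z_max[of x] y z by (auto simp: Z_def)
    qed
  qed
qed

lemma pos_if_deriv_pos_at_zeros:
  fixes w w' :: "real \<Rightarrow> real"
  assumes der: "\<And>t. t \<in> {a..b} \<Longrightarrow> (w has_real_derivative w' t) (at t within {a..b})"
    and "0 \<le> w a"
    and zeros: "\<And>t. t \<in> {a..b} \<Longrightarrow> w t = 0 \<Longrightarrow> 0 < w' t"
    and t: "t \<in> {a<..b}"
  shows "0 < w t"
proof (rule ccontr)
  assume "\<not> 0 < w t"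
  obtain s where s: "s \<in> {a<..b}" "w s < 0"
  proof (cases "w t = 0")
    case True
    have "t \<in> {a..b}" using t by simp
    moreover from this have "0 < w' t" using zeros True by simp
    ultimately obtain d where "d > 0"
      and d: "\<And>h. h > 0 \<Longrightarrow> t - h \<in> {a..b} \<Longrightarrow> h < d \<Longrightarrow> w (t - h) < w t"
      using has_real_derivative_pos_inc_left[OF der] by blast
    define h where "h = min (d / 2) ((t - a) / 2)"
    have "h > 0" "h < d" using \<open>d > 0\<close> t by (simp_all add: h_def)
    moreover have "h \<le> (t - a) / 2" unfolding h_def by (rule min.cobounded2)
    ultimately show thesis
      using that[of "t - h"] d[of h] True t by force
  next
    case False
    then show thesis using that t \<open>\<not> 0 < w t\<close> by simp
  qed
  have cont: "continuous_on {a..s} w"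
    using DERIV_continuous_on[OF der] by (rule continuous_on_subset) (use s in auto)
  obtain z where z: "z \<in> {a..<s}" "w z = 0" and neg: "\<And>y. y \<in> {z<..s} \<Longrightarrow> w y < 0"
    using last_zero_before_negative[OF _ cont \<open>0 \<le> w a\<close> \<open>w s < 0\<close>] s by auto
  have "z \<in> {a..b}" using z s by simp
  moreover from this have "0 < w' z" using zeros z by simp
  ultimately obtain d where "d > 0"
    and d: "\<And>h. h > 0 \<Longrightarrow> z + h \<in> {a..b} \<Longrightarrow> h < d \<Longrightarrow> w z < w (z + h)"
    using has_real_derivative_pos_inc_right[OF der] by blast
  define h where "h = min (d / 2) (s - z)"
  have "h > 0" "h < d" using \<open>d > 0\<close> z by (simp_all add: h_def)
  moreover have "h \<le> s - z" unfolding h_def by (rule min.cobounded2)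
  ultimately show False using d[of h] neg[of "z + h"] z s by simp
qed

lemma continuous_on_root_of_strict_mono:
  fixes P :: "real \<Rightarrow> real \<Rightarrow> real" and r :: "real \<Rightarrow> real"
  assumes mono: "\<And>y. strict_mono (\<lambda>c. P c y)"
    and cont: "\<And>c. continuous_on UNIV (P c)"
    and root: "\<And>y. P (r y) y = 0"
  shows "continuous_on UNIV r"
proof -
  have less_iff: "P c y < 0 \<longleftrightarrow> c < r y" "0 < P c y \<longleftrightarrow> r y < c" for c y
    using strict_mono_less[OF mono[of y]] root[of y] by metis+
  have lim: "(P c \<longlongrightarrow> P c y0) (at y0)" for c y0
    using cont[of c] by (simp add: continuous_on_def)
  have "(r \<longlongrightarrow> r y0) (at y0)" for y0
  proof (rule order_tendstoI)
    fix a assume "a < r y0"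
    then have "\<forall>\<^sub>F y in at y0. P a y < 0" using less_iff(1) lim by (blast intro: order_tendstoD)
    then show "\<forall>\<^sub>F y in at y0. a < r y" by (simp add: less_iff)
  next
    fix a assume "r y0 < a"
    then have "\<forall>\<^sub>F y in at y0. 0 < P a y" using less_iff(2) lim by (blast intro: order_tendstoD)
    then show "\<forall>\<^sub>F y in at y0. r y < a" by (simp add: less_iff)
  qed
  then show ?thesis by (simp add: continuous_on_def)
qed

section \<open>Existence and uniqueness for Lipschitz ODEs\<close>

lemma clamp_real: "(a::real) \<le> b \<Longrightarrow> clamp a b x = max a (min b x)"
  unfolding clamp_def Basis_real_def by auto

lemma power_div_fact_tendsto_zero: "(\<lambda>n. x ^ n / fact n :: real) \<longlonglongrightarrow> 0"
  using summable_LIMSEQ_zero[OF summable_exp_generic[of x]] by (simp add: divide_inverse_commute)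

lemma has_integral_power_div_fact:
  fixes c y :: real
  assumes "0 \<le> y"
  shows "((\<lambda>s. c * ((c * s) ^ k / fact k)) has_integral (c * y) ^ Suc k / fact (Suc k)) {0..y}"
proof -
  define C where "C = c ^ Suc k / fact (Suc k)"
  have "((\<lambda>s. C * s ^ Suc k) has_real_derivative c * ((c * s) ^ k / fact k)) (at s within {0..y})"
    for s
  proof -
    have "C * (real (Suc k) * s ^ (Suc k - 1)) = c * ((c * s) ^ k / fact k)"
      by (simp add: C_def fact_Suc power_mult_distrib del: of_nat_Suc)
    then show ?thesis
      using DERIV_cmult[OF DERIV_pow, of C "Suc k" s] by (simp add: has_field_derivative_at_within)
  qed
  then have "((\<lambda>s. c * ((c * s) ^ k / fact k)) has_integral C * y ^ Suc k - C * 0 ^ Suc k) {0..y}"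
    unfolding has_real_derivative_iff_has_vector_derivative
    by (intro fundamental_theorem_of_calculus assms) blast
  moreover have "C * y ^ Suc k - C * 0 ^ Suc k = (c * y) ^ Suc k / fact (Suc k)"
    by (simp add: C_def power_mult_distrib)
  ultimately show ?thesis by simp
qed

locale lipschitz_field =
  fixes f :: "real \<Rightarrow> real \<Rightarrow> real" and L :: real
  assumes continuous: "continuous_on UNIV (\<lambda>(t, u). f t u)"
    and lipschitz: "\<And>t u w. \<bar>f t u - f t w\<bar> \<le> L * \<bar>u - w\<bar>"
begin

lemma L_nonneg: "0 \<le> L"
proof -
  have "\<bar>f 0 1 - f 0 0\<bar> \<le> L" using lipschitz[of 0 1 0] by simp
  then show ?thesis using abs_ge_zero order_trans by blast
qed

lemma continuous_on_field_comp:
  assumes "continuous_on S v"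
  shows "continuous_on S (\<lambda>s. f s (v s))"
proof -
  have "continuous_on S (\<lambda>s. (s, v s))" by (intro continuous_on_Pair continuous_on_id assms)
  from continuous_on_compose2[OF continuous this] show ?thesis by simp
qed

text \<open>Clamping the upper limit of integration to [0, T] makes the Picard iterates bounded
  continuous functions on the whole line.\<close>

definition picard :: "real \<Rightarrow> real \<Rightarrow> (real \<Rightarrow>\<^sub>C real) \<Rightarrow> (real \<Rightarrow>\<^sub>C real)" where
  "picard T \<xi> u = Bcontfun (\<lambda>x. \<xi> + integral {0..clamp 0 T x} (\<lambda>s. f s (u s)))"

lemma picard_apply:
  assumes "0 \<le> T"
  shows "picard T \<xi> u x = \<xi> + integral {0..clamp 0 T x} (\<lambda>s. f s (u s))"
proof -
  define g where "g y = \<xi> + integral {0..y} (\<lambda>s. f s (u s))" for y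
  have "continuous_on (cbox 0 T) g"
    unfolding g_def cbox_interval
    by (intro continuous_intros indefinite_integral_continuous_1 integrable_continuous_real
        continuous_on_field_comp) simp
  then have "(\<lambda>x. g (clamp 0 T x)) \<in> bcontfun"
    unfolding bcontfun_def
    by (blast intro: clamp_continuous_on clamp_bounded compact_imp_bounded
        compact_continuous_image compact_cbox)
  then show ?thesis by (simp add: picard_def g_def Bcontfun_inverse)
qed

lemma picard_iterate_dist:
  assumes "0 \<le> T"
  shows "\<bar>(picard T \<xi> ^^ k) u x - (picard T \<xi> ^^ k) w x\<bar>
    \<le> (L * clamp 0 T x) ^ k / fact k * dist u w"
proof (induction k arbitrary: x)
  case 0
  then show ?case using dist_bounded[of u x w] by (simp add: dist_real_def)
next
  case (Suc k)
  define A where "A = (picard T \<xi> ^^ k) u"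
  define B where "B = (picard T \<xi> ^^ k) w"
  define y where "y = clamp 0 T x"
  have y: "0 \<le> y" "y \<le> T" using assms by (auto simp: y_def clamp_real)
  have int: "(\<lambda>s. f s (v s)) integrable_on {0..y}" for v :: "real \<Rightarrow>\<^sub>C real"
    by (intro integrable_continuous_real continuous_on_field_comp) simp
  have "(picard T \<xi> ^^ Suc k) u x - (picard T \<xi> ^^ Suc k) w x
      = integral {0..y} (\<lambda>s. f s (A s)) - integral {0..y} (\<lambda>s. f s (B s))"
    by (simp add: picard_apply assms A_def B_def y_def)
  also have "\<dots> = integral {0..y} (\<lambda>s. f s (A s) - f s (B s))"
    by (rule integral_diff[symmetric]) (rule int)+
  finally have "\<bar>(picard T \<xi> ^^ Suc k) u x - (picard T \<xi> ^^ Suc k) w x\<bar>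
      = norm (integral {0..y} (\<lambda>s. f s (A s) - f s (B s)))" by simp
  also have "\<dots> \<le> integral {0..y} (\<lambda>s. L * ((L * s) ^ k / fact k) * dist u w)"
  proof (rule integral_norm_bound_integral)
    show "(\<lambda>s. f s (A s) - f s (B s)) integrable_on {0..y}"
      by (intro integrable_diff int)
    show "(\<lambda>s. L * ((L * s) ^ k / fact k) * dist u w) integrable_on {0..y}"
      by (intro integrable_continuous_real continuous_intros) auto
    fix s assume s: "s \<in> {0..y}"
    then have "clamp 0 T s = s" using y by (simp add: clamp_real)
    then have "\<bar>A s - B s\<bar> \<le> (L * s) ^ k / fact k * dist u w"
      using Suc.IH[of s] by (simp add: A_def B_def)
    then have "L * \<bar>A s - B s\<bar> \<le> L * ((L * s) ^ k / fact k * dist u w)"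
      by (rule mult_left_mono) (rule L_nonneg)
    then show "norm (f s (A s) - f s (B s)) \<le> L * ((L * s) ^ k / fact k) * dist u w"
      using lipschitz[of s "A s" "B s"] by simp
  qed
  also have "\<dots> = (L * y) ^ Suc k / fact (Suc k) * dist u w"
    using has_integral_mult_left[OF has_integral_power_div_fact[OF y(1)]] by (rule integral_unique)
  finally show ?case by (simp add: y_def)
qed

lemma picard_has_fixed_point:
  assumes "0 \<le> T"
  shows "\<exists>u. picard T \<xi> u = u"
proof -
  obtain k where k: "(L * T) ^ k / fact k < 1 / 2"
    using order_tendstoD(2)[OF power_div_fact_tendsto_zero[of "L * T"], of "1 / 2"]
    by (auto simp: eventually_sequentially)
  have "dist ((picard T \<xi> ^^ k) u) ((picard T \<xi> ^^ k) w) \<le> 1 / 2 * dist u w" for u w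
  proof (rule dist_bound)
    fix x
    have "(L * clamp 0 T x) ^ k / fact k \<le> (L * T) ^ k / fact k"
      using assms L_nonneg
      by (intro divide_right_mono power_mono mult_left_mono) (auto simp: clamp_real)
    then have "(L * clamp 0 T x) ^ k / fact k \<le> 1 / 2" using k by linarith
    then have "(L * clamp 0 T x) ^ k / fact k * dist u w \<le> 1 / 2 * dist u w"
      by (rule mult_right_mono) simp
    with picard_iterate_dist[OF assms, where \<xi>=\<xi> and k=k and u=u and x=x and w=w]
    show "dist ((picard T \<xi> ^^ k) u x) ((picard T \<xi> ^^ k) w x) \<le> 1 / 2 * dist u w"
      unfolding dist_real_def by (rule order_trans)
  qed
  then have "\<exists>!u. (picard T \<xi> ^^ k) u = u"
    by (intro banach_fix_type[of "1 / 2"]) auto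
  then obtain u where u: "(picard T \<xi> ^^ k) u = u" and uniq: "\<And>w. (picard T \<xi> ^^ k) w = w \<Longrightarrow> w = u"
    by (elim ex1E) blast
  have "(picard T \<xi> ^^ k) (picard T \<xi> u) = picard T \<xi> ((picard T \<xi> ^^ k) u)"
    by (rule funpow_swap1[symmetric])
  also have "\<dots> = picard T \<xi> u" by (simp only: u)
  finally show ?thesis using uniq by blast
qed

theorem exists_ode_solution:
  assumes "0 \<le> T"
  shows "\<exists>v. v 0 = \<xi> \<and> (\<forall>t\<in>{0..T}. (v has_real_derivative f t (v t)) (at t within {0..T}))"
proof -
  obtain u where u: "picard T \<xi> u = u" using picard_has_fixed_point[OF assms] by blast
  have eq: "u t = \<xi> + integral {0..t} (\<lambda>s. f s (u s))" if "t \<in> {0..T}" for t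
    using picard_apply[OF assms, of \<xi> u t] that by (simp add: u clamp_real)
  have "(u has_real_derivative f t (u t)) (at t within {0..T})" if t: "t \<in> {0..T}" for t
  proof -
    have "continuous_on {0..T} (\<lambda>s. f s (u s))" by (intro continuous_on_field_comp) simp
    from DERIV_add[OF DERIV_const integral_has_real_derivative[OF this t]]
    have "((\<lambda>y. \<xi> + integral {0..y} (\<lambda>s. f s (u s))) has_real_derivative f t (u t))
        (at t within {0..T})"
      by simp
    then show ?thesis
      by (rule has_field_derivative_transform_within[where d=1]) (use t eq in auto)
  qed
  then show ?thesis using eq[of 0] assms by auto
qed

end

lemma weighted_energy_deriv_nonpos:
  fixes d D e L \<eta> :: real
  assumes "0 \<le> L" "\<bar>D\<bar> \<le> L * \<bar>d\<bar> + \<eta>" "0 < e" "e \<le> 1"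
  shows "e * (2 * d * D) + e * (- (2 * L + 1)) * d\<^sup>2 - \<eta>\<^sup>2 \<le> 0"
proof -
  have "d * D \<le> \<bar>d\<bar> * \<bar>D\<bar>" by (metis abs_ge_self abs_mult)
  also have "\<dots> \<le> \<bar>d\<bar> * (L * \<bar>d\<bar> + \<eta>)" by (rule mult_left_mono[OF assms(2)]) simp
  finally have "2 * d * D \<le> 2 * L * d\<^sup>2 + 2 * \<bar>d\<bar> * \<eta>"
    by (simp add: algebra_simps power2_eq_square)
  moreover have "2 * \<bar>d\<bar> * \<eta> \<le> d\<^sup>2 + \<eta>\<^sup>2"
    using zero_le_power2[of "\<bar>d\<bar> - \<eta>"] by (simp add: power2_diff)
  moreover have "- (2 * L + 1) * d\<^sup>2 = - (2 * L * d\<^sup>2) - d\<^sup>2"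
    by (simp add: algebra_simps)
  ultimately have "- (2 * L + 1) * d\<^sup>2 + 2 * d * D \<le> \<eta>\<^sup>2" by linarith
  then have "e * (- (2 * L + 1) * d\<^sup>2 + 2 * d * D) \<le> e * \<eta>\<^sup>2"
    using assms(3) by (intro mult_left_mono) simp_all
  also have "\<dots> \<le> \<eta>\<^sup>2" using assms(3,4) by (simp add: mult_left_le_one_le)
  finally show ?thesis by (simp add: algebra_simps)
qed

lemma ode_solutions_dist_sq_le:
  fixes v w :: "real \<Rightarrow> real" and f g :: "real \<Rightarrow> real \<Rightarrow> real"
  assumes L: "0 \<le> L"
    and cont_v: "continuous_on {0..T} v" and cont_w: "continuous_on {0..T} w"
    and der_v: "\<And>t. t \<in> {0<..<T} \<Longrightarrow> (v has_real_derivative f t (v t)) (at t)"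
    and der_w: "\<And>t. t \<in> {0<..<T} \<Longrightarrow> (w has_real_derivative g t (w t)) (at t)"
    and lip: "\<And>t x y. \<bar>f t x - f t y\<bar> \<le> L * \<bar>x - y\<bar>"
    and close: "\<And>t x. \<bar>f t x - g t x\<bar> \<le> \<eta>"
    and t: "t \<in> {0..T}"
  shows "(v t - w t)\<^sup>2 \<le> ((v 0 - w 0)\<^sup>2 + T * \<eta>\<^sup>2) * exp ((2 * L + 1) * T)"
proof -
  define d where "d s = v s - w s" for s
  \<comment> \<open>The weight absorbs the Lipschitz growth, the linear term the perturbation \<open>\<eta>\<close>.\<close>
  define \<psi> where "\<psi> s = exp (- ((2 * L + 1) * s)) * (d s)\<^sup>2 - \<eta>\<^sup>2 * s" for s
  have "\<psi> t \<le> \<psi> 0"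
  proof (rule DERIV_nonpos_imp_decreasing_open[of 0 t \<psi>])
    show "0 \<le> t" using t by simp
    show "continuous_on {0..t} \<psi>"
      unfolding \<psi>_def d_def using t
      by (intro continuous_intros continuous_on_subset[OF cont_v] continuous_on_subset[OF cont_w])
         auto
    fix s assume s: "0 < s" "s < t"
    define D where "D = f s (v s) - g s (w s)"
    define e where "e = exp (- ((2 * L + 1) * s))"
    have "(d has_real_derivative D) (at s)"
      unfolding d_def D_def using s t by (intro DERIV_diff der_v der_w) auto
    from DERIV_fun_pow[OF this, of 2]
    have d2: "((\<lambda>s. (d s)\<^sup>2) has_real_derivative 2 * d s * D) (at s)" by simp
    have e: "((\<lambda>s. exp (- ((2 * L + 1) * s))) has_real_derivative e * (- (2 * L + 1))) (at s)"
      unfolding e_def by (auto intro!: derivative_eq_intros)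
    have "(\<psi> has_real_derivative
        e * (2 * d s * D) + e * (- (2 * L + 1)) * (d s)\<^sup>2 - \<eta>\<^sup>2 * 1) (at s)"
      unfolding \<psi>_def e_def
      by (intro DERIV_diff DERIV_mult' DERIV_cmult DERIV_ident d2 e[unfolded e_def])
    then have deriv: "(\<psi> has_real_derivative
        e * (2 * d s * D) + e * (- (2 * L + 1)) * (d s)\<^sup>2 - \<eta>\<^sup>2) (at s)"
      by (simp only: mult_1_right)
    have "- (2 * L + 1) * s \<le> 0" using L s by (intro mult_nonpos_nonneg) auto
    then have "0 < e" "e \<le> 1" by (simp_all only: e_def exp_gt_zero exp_le_one_iff)
    moreover have "\<bar>D\<bar> \<le> L * \<bar>d s\<bar> + \<eta>"
      using lip[of s "v s" "w s"] close[of s "w s"] by (simp add: D_def d_def abs_le_iff)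
    ultimately have "e * (2 * d s * D) + e * (- (2 * L + 1)) * (d s)\<^sup>2 - \<eta>\<^sup>2 \<le> 0"
      using L by (intro weighted_energy_deriv_nonpos)
    with deriv show "\<exists>y. (\<psi> has_real_derivative y) (at s) \<and> y \<le> 0" by blast
  qed
  moreover have "t * \<eta>\<^sup>2 \<le> T * \<eta>\<^sup>2" using t by (intro mult_right_mono) auto
  ultimately have "exp (- ((2 * L + 1) * t)) * (d t)\<^sup>2 \<le> (d 0)\<^sup>2 + T * \<eta>\<^sup>2"
    by (simp add: \<psi>_def mult.commute)
  define a where "a = (2 * L + 1) * t"
  have "(d t)\<^sup>2 = exp a * (exp (- a) * (d t)\<^sup>2)"
    by (simp add: mult.assoc[symmetric] exp_minus_inverse)
  also have "\<dots> \<le> exp a * ((d 0)\<^sup>2 + T * \<eta>\<^sup>2)"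
    using \<open>exp (- ((2 * L + 1) * t)) * (d t)\<^sup>2 \<le> _\<close> by (intro mult_left_mono) (simp_all add: a_def)
  also have "\<dots> \<le> exp ((2 * L + 1) * T) * ((d 0)\<^sup>2 + T * \<eta>\<^sup>2)"
    using t L by (intro mult_right_mono) (auto simp: a_def intro!: mult_left_mono)
  finally show ?thesis by (simp add: d_def mult.commute)
qed

corollary ode_solutions_unique:
  fixes v w :: "real \<Rightarrow> real"
  assumes "0 \<le> L"
    and "continuous_on {0..T} v" "continuous_on {0..T} w"
    and "\<And>t. t \<in> {0<..<T} \<Longrightarrow> (v has_real_derivative f t (v t)) (at t)"
    and "\<And>t. t \<in> {0<..<T} \<Longrightarrow> (w has_real_derivative f t (w t)) (at t)"
    and "\<And>t x y. \<bar>f t x - f t y\<bar> \<le> L * \<bar>x - y\<bar>"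
    and "v 0 = w 0" "t \<in> {0..T}"
  shows "v t = w t"
  using ode_solutions_dist_sq_le[where \<eta> = 0 and g = f, OF assms(1-6)] assms(7,8) by simp

section \<open>Periodic functions\<close>

lemma periodic_frac:
  assumes "\<And>x. f (x + 1) = f x"
  shows "f (frac x) = f x"
proof -
  interpret periodic_fun_simple' f by standard (rule assms)
  show ?thesis using minus_of_int[of x "\<lfloor>x\<rfloor>"] by (simp add: frac_def)
qed

lemma periodic_attains_max:
  fixes w :: "real \<Rightarrow> real"
  assumes "continuous_on {0..1} w" and "\<And>x. w (x + 1) = w x"
  obtains x0 where "x0 \<in> {0..1}" "\<And>x. w x \<le> w x0"
proof -
  obtain x0 where "x0 \<in> {0..1}" and max: "\<And>y. y \<in> {0..1} \<Longrightarrow> w y \<le> w x0"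
    using continuous_attains_sup[OF compact_Icc _ assms(1)] by auto
  moreover have "w x \<le> w x0" for x
    using max[of "frac x"] periodic_frac[of w, OF assms(2)] frac_lt_1[of x] by simp
  ultimately show thesis using that by blast
qed

lemma periodic_attains_min:
  fixes w :: "real \<Rightarrow> real"
  assumes "continuous_on {0..1} w" and "\<And>x. w (x + 1) = w x"
  obtains x0 where "x0 \<in> {0..1}" "\<And>x. w x0 \<le> w x"
  using periodic_attains_max[of "\<lambda>x. - w x"] assms by (auto intro: continuous_intros)

lemma has_real_derivative_periodic_extension:
  fixes g g' :: "real \<Rightarrow> real"
  assumes per: "\<And>t. t \<in> {0..1} \<Longrightarrow> g (t + 1) = g t"
    and per': "\<And>t. t \<in> {0..1} \<Longrightarrow> g' (t + 1) = g' t"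
    and der: "\<And>t. t \<in> {0<..<2} \<Longrightarrow> (g has_real_derivative g' t) (at t)"
  shows "((\<lambda>x. g (frac x)) has_real_derivative g' (frac x)) (at x)"
proof -
  have frac_eq: "g (frac t) = g t" if "t \<in> {0<..<2}" for t
  proof (cases "t < 1")
    case False
    then have "frac t = t - 1" using that by (simp add: frac_unique_iff)
    then show ?thesis using per[of "t - 1"] False that by simp
  qed (use that in simp)
  define y where "y = frac x + 1"
  have "0 < y" "y < 2" using frac_lt_1[of x] frac_ge_0[of x] unfolding y_def by linarith+
  then have y: "y \<in> {0<..<2}" by simp
  have "((\<lambda>z. g (frac z)) has_real_derivative g' y) (at y)"
    using der[OF y] open_greaterThanLessThan y frac_eq[symmetric]
    by (rule has_field_derivative_transform_within_open)
  moreover have "y = x + of_int (1 - \<lfloor>x\<rfloor>)" by (simp add: y_def frac_def)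
  ultimately have "((\<lambda>z. g (frac z)) has_real_derivative g' y) (at (x + of_int (1 - \<lfloor>x\<rfloor>)))"
    by (simp only:)
  from DERIV_shift[THEN iffD1, OF this]
  have "((\<lambda>z. g (frac z)) has_real_derivative g' y) (at x)"
    by (simp only: frac_add_of_int_right)
  moreover have "g' y = g' (frac x)" using per'[of "frac x"] frac_lt_1[of x] by (simp add: y_def)
  ultimately show ?thesis by simp
qed

lemma periodic_C2_deriv_periodic:
  assumes "periodic_C2 F F1 F2"
  shows "F1 (x + 1) = F1 x"
proof -
  have "((\<lambda>x. F (x + 1)) has_real_derivative F1 (x + 1)) (at x)"
    using assms DERIV_shift[of F "F1 (x + 1)" x 1] by (simp add: periodic_C2_def)
  then have "(F has_real_derivative F1 (x + 1)) (at x)"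
    using assms by (simp add: periodic_C2_def)
  with assms show ?thesis by (intro DERIV_unique) (auto simp: periodic_C2_def)
qed

lemma periodic_C2_diff:
  assumes "periodic_C2 F F1 F2" "periodic_C2 E E1 E2"
  shows "periodic_C2 (\<lambda>x. F x - E x) (\<lambda>x. F1 x - E1 x) (\<lambda>x. F2 x - E2 x)"
  using assms unfolding periodic_C2_def by (auto intro!: DERIV_diff continuous_intros)

lemma periodic_C2_critical_point:
  assumes "periodic_C2 F F1 F2"
  obtains x where "F1 x = 0" "F2 x \<le> 0"
proof -
  have der: "(F has_real_derivative F1 x) (at x)" "(F1 has_real_derivative F2 x) (at x)" for x
    using assms by (auto simp: periodic_C2_def)
  have "continuous_on {0..1} F" by (rule has_real_derivative_imp_continuous_on[OF der(1)])
  moreover have "\<And>x. F (x + 1) = F x" using assms by (simp add: periodic_C2_def)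
  ultimately obtain z where "\<And>x. F z \<le> F x" by (metis periodic_attains_min)
  then have "F1 z = 0" by (intro DERIV_local_min[OF der(1), of 1]) auto
  show thesis
  proof (cases "\<exists>x. F1 x = 0 \<and> F2 x \<le> 0")
    case False
    then have pos: "0 < F2 x" if "F1 x = 0" for x using that by (meson not_le)
    have "0 < F1 (z + 1)"
      by (rule pos_if_deriv_pos_at_zeros[of z "z + 1" F1 F2])
         (use der(2) pos \<open>F1 z = 0\<close> in \<open>auto intro: has_field_derivative_at_within\<close>)
    then show ?thesis using periodic_C2_deriv_periodic[OF assms, of z] \<open>F1 z = 0\<close> by simp
  qed (use that in blast)
qed

lemma periodic_C2_deriv_extrema:
  assumes "periodic_C2 F F1 F2"
  obtains x0 x1 where "x0 \<in> {0..1}" "x1 \<in> {0..1}" "\<And>x. F1 x1 \<le> F1 x \<and> F1 x \<le> F1 x0"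
    and "F2 x0 = 0" "F2 x1 = 0"
proof -
  have der: "(F1 has_real_derivative F2 x) (at x)" for x
    using assms by (simp add: periodic_C2_def)
  have cont: "continuous_on {0..1} F1" by (rule has_real_derivative_imp_continuous_on[OF der])
  obtain x0 where x0: "x0 \<in> {0..1}" "\<And>x. F1 x \<le> F1 x0"
    using periodic_attains_max[OF cont periodic_C2_deriv_periodic[OF assms]] by blast
  obtain x1 where x1: "x1 \<in> {0..1}" "\<And>x. F1 x1 \<le> F1 x"
    using periodic_attains_min[OF cont periodic_C2_deriv_periodic[OF assms]] by blast
  have "F2 x0 = 0" using x0(2) by (intro DERIV_local_max[OF der, of 1]) auto
  moreover have "F2 x1 = 0" using x1(2) by (intro DERIV_local_min[OF der, of 1]) auto
  ultimately show thesis using that x0 x1 by blast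
qed

lemma integral_periodic_zero_mean:
  fixes g :: "real \<Rightarrow> real"
  assumes cont: "continuous_on {0..2} g"
    and per: "\<And>t. t \<in> {0..1} \<Longrightarrow> g (t + 1) = g t"
    and mean: "integral {0..1} g = 0"
    and t: "t \<in> {0..1}"
  shows "integral {0..t + 1} g = integral {0..t} g"
proof -
  define \<Phi> where "\<Phi> y = integral {0..y} g" for y
  have der: "(\<Phi> has_real_derivative g s) (at s)" if "s \<in> {0<..<2}" for s
    unfolding \<Phi>_def using integral_has_real_derivative[OF cont, of s] that
    by (simp add: at_within_Icc_at)
  have cont_\<Phi>: "continuous_on {0..2} \<Phi>"
    unfolding \<Phi>_def by (intro indefinite_integral_continuous_1 integrable_continuous_real cont)
  have "\<Phi> (t + 1) - \<Phi> t = \<Phi> (0 + 1) - \<Phi> 0"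
  proof (rule DERIV_isconst2[where f = "\<lambda>t. \<Phi> (t + 1) - \<Phi> t"])
    show "continuous_on {0..1} (\<lambda>t. \<Phi> (t + 1) - \<Phi> t)"
      by (intro continuous_intros continuous_on_compose2[OF cont_\<Phi>] continuous_on_subset[OF cont_\<Phi>])
         auto
    fix s :: real assume s: "0 < s" "s < 1"
    have "((\<lambda>t. \<Phi> (t + 1)) has_real_derivative g (s + 1)) (at s)"
      using der[of "s + 1"] s DERIV_shift[of \<Phi> "g (s + 1)" s 1] by simp
    from DERIV_diff[OF this der[of s]] show "((\<lambda>t. \<Phi> (t + 1) - \<Phi> t) has_real_derivative 0) (at s)"
      using s per[of s] by simp
  qed (use t in auto)
  then show ?thesis using mean by (simp add: \<Phi>_def)
qed

lemma has_real_derivative_periodic_antiderivative: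
  fixes g :: "real \<Rightarrow> real"
  assumes cont: "continuous_on {0..2} g"
    and per: "\<And>t. t \<in> {0..1} \<Longrightarrow> g (t + 1) = g t"
    and mean: "integral {0..1} g = 0"
  shows "((\<lambda>x. integral {0..frac x} g) has_real_derivative g (frac x)) (at x)"
proof (rule has_real_derivative_periodic_extension[where g = "\<lambda>y. integral {0..y} g" and g' = g])
  show "integral {0..t + 1} g = integral {0..t} g" if "t \<in> {0..1}" for t
    by (rule integral_periodic_zero_mean[OF cont per mean that])
  show "((\<lambda>y. integral {0..y} g) has_real_derivative g t) (at t)" if "t \<in> {0<..<2}" for t
    using integral_has_real_derivative[OF cont, of t] that by (simp add: at_within_Icc_at)
qed (rule per)

section \<open>The cell problem for a bounded Lipschitz Hamiltonian\<close>

locale bounded_lipschitz_hamiltonian =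
  fixes G :: "real \<Rightarrow> real \<Rightarrow> real" and K L :: real
  assumes continuous: "continuous_on UNIV (\<lambda>(p, x). G p x)"
    and bounded: "\<And>p x. \<bar>G p x\<bar> \<le> K"
    and lipschitz: "\<And>p q x. \<bar>G p x - G q x\<bar> \<le> L * \<bar>p - q\<bar>"
    and periodic: "\<And>p x. G p (x + 1) = G p x"
begin

lemma continuous_on_G_comp:
  assumes "continuous_on S a" "continuous_on S b"
  shows "continuous_on S (\<lambda>s. G (a s) (b s))"
proof -
  have "continuous_on S (\<lambda>s. (a s, b s))" by (intro continuous_on_Pair assms)
  from continuous_on_compose2[OF continuous this] show ?thesis by simp
qed

lemma lipschitz_field_cell_ode: "lipschitz_field (\<lambda>t u. c - G u t) L"
proof
  show "continuous_on UNIV (\<lambda>(t, u). c - G u t)"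
    using continuous_on_G_comp[of UNIV snd fst] by (simp add: case_prod_unfold continuous_intros)
  show "\<bar>(c - G u t) - (c - G w t)\<bar> \<le> L * \<bar>u - w\<bar>" for t u w
    using lipschitz[of w t u] by (simp add: abs_minus_commute)
qed

lemma K_nonneg: "0 \<le> K"
  using bounded[of 0 0] by linarith

lemma L_nonneg: "0 \<le> L"
  using lipschitz_field.L_nonneg[OF lipschitz_field_cell_ode] .

text \<open>The trajectory plays the role of \<open>\<theta> + F'\<close>. It lives on [0, 2] rather than [0, 1] so that
  its 1-periodic extension can be differentiated at the integers.\<close>

definition trajectory :: "real \<Rightarrow> real \<Rightarrow> real \<Rightarrow> real" where
  "trajectory c \<xi> = (SOME v. v 0 = \<xi> \<and>
     (\<forall>t\<in>{0..2}. (v has_real_derivative c - G (v t) t) (at t within {0..2})))"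

lemma trajectory:
  "trajectory c \<xi> 0 = \<xi> \<and>
   (\<forall>t\<in>{0..2}.
      (trajectory c \<xi> has_real_derivative c - G (trajectory c \<xi> t) t) (at t within {0..2}))"
proof -
  have "\<exists>v. v 0 = \<xi> \<and> (\<forall>t\<in>{0..2}. (v has_real_derivative c - G (v t) t) (at t within {0..2}))"
    using lipschitz_field.exists_ode_solution[OF lipschitz_field_cell_ode[of c], of 2 \<xi>] by simp
  then show ?thesis unfolding trajectory_def by (rule someI_ex)
qed

lemmas trajectory_0 = trajectory[THEN conjunct1]
  and has_real_derivative_trajectory = trajectory[THEN conjunct2, rule_format]

lemma has_real_derivative_trajectory_at:
  "t \<in> {0<..<2} \<Longrightarrow> (trajectory c \<xi> has_real_derivative c - G (trajectory c \<xi> t) t) (at t)"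
  using has_real_derivative_trajectory[of t c \<xi>] by (simp add: at_within_Icc_at)

lemma continuous_on_trajectory: "continuous_on {0..2} (trajectory c \<xi>)"
  using has_real_derivative_trajectory by (rule DERIV_continuous_on)

lemma trajectory_dist_le:
  assumes "t \<in> {0..2}"
  shows "\<bar>trajectory c \<xi> t - trajectory c' \<xi>' t\<bar> \<le> (\<bar>\<xi> - \<xi>'\<bar> + 2 * \<bar>c - c'\<bar>) * exp (4 * L + 2)"
proof -
  define E where "E = exp (4 * L + 2)"
  have "(trajectory c \<xi> t - trajectory c' \<xi>' t)\<^sup>2 \<le> ((\<xi> - \<xi>')\<^sup>2 + 2 * (c - c')\<^sup>2) * E"
  proof -
    have "(trajectory c \<xi> t - trajectory c' \<xi>' t)\<^sup>2
        \<le> ((trajectory c \<xi> 0 - trajectory c' \<xi>' 0)\<^sup>2 + 2 * \<bar>c - c'\<bar>\<^sup>2) * exp ((2 * L + 1) * 2)"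
    proof (rule ode_solutions_dist_sq_le[where f = "\<lambda>t u. c - G u t" and g = "\<lambda>t u. c' - G u t"])
      show "\<bar>(c - G x t) - (c - G y t)\<bar> \<le> L * \<bar>x - y\<bar>" for t x y
        using lipschitz[of y t x] by (simp add: abs_minus_commute)
    qed (use assms L_nonneg continuous_on_trajectory has_real_derivative_trajectory_at in auto)
    then show ?thesis by (simp add: trajectory_0 E_def algebra_simps)
  qed
  also have "\<dots> \<le> (\<bar>\<xi> - \<xi>'\<bar> + 2 * \<bar>c - c'\<bar>)\<^sup>2 * E"
    using mult_nonneg_nonneg[OF abs_ge_zero abs_ge_zero, of "\<xi> - \<xi>'" "c - c'"]
    by (intro mult_right_mono) (simp_all add: E_def power2_sum power_mult_distrib)
  also have "\<dots> \<le> (\<bar>\<xi> - \<xi>'\<bar> + 2 * \<bar>c - c'\<bar>)\<^sup>2 * E\<^sup>2"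
    using L_nonneg by (intro mult_left_mono) (simp_all add: E_def power2_eq_square)
  finally have "\<bar>trajectory c \<xi> t - trajectory c' \<xi>' t\<bar> \<le> \<bar>(\<bar>\<xi> - \<xi>'\<bar> + 2 * \<bar>c - c'\<bar>) * E\<bar>"
    unfolding abs_le_square_iff by (simp add: power_mult_distrib)
  then show ?thesis by (simp add: E_def)
qed

lemma continuous_on_trajectory_param:
  assumes "t \<in> {0..2}"
  shows "continuous_on UNIV (\<lambda>c. trajectory c \<xi> t)" and "continuous_on UNIV (\<lambda>\<xi>. trajectory c \<xi> t)"
proof -
  define E where "E = exp (4 * L + 2)"
  have "0 \<le> E" by (simp add: E_def)
  have "(2 * E)-lipschitz_on UNIV (\<lambda>c. trajectory c \<xi> t)"
    using trajectory_dist_le[OF assms, of _ \<xi> _ \<xi>] \<open>0 \<le> E\<close>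
    by (intro lipschitz_onI) (simp_all add: dist_real_def E_def mult_ac)
  then show "continuous_on UNIV (\<lambda>c. trajectory c \<xi> t)" by (rule lipschitz_on_continuous_on)
  have "E-lipschitz_on UNIV (\<lambda>\<xi>. trajectory c \<xi> t)"
    using trajectory_dist_le[OF assms, of c _ c] \<open>0 \<le> E\<close>
    by (intro lipschitz_onI) (simp_all add: dist_real_def E_def mult.commute)
  then show "continuous_on UNIV (\<lambda>\<xi>. trajectory c \<xi> t)" by (rule lipschitz_on_continuous_on)
qed

lemma trajectory_strict_mono:
  assumes "c < c'" and "t \<in> {0<..2}"
  shows "trajectory c \<xi> t < trajectory c' \<xi> t"
proof -
  have "0 < trajectory c' \<xi> t - trajectory c \<xi> t"
  proof (rule pos_if_deriv_pos_at_zeros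
      [OF DERIV_diff[OF has_real_derivative_trajectory has_real_derivative_trajectory]])
    fix s assume "trajectory c' \<xi> s - trajectory c \<xi> s = 0"
    then show "0 < c' - G (trajectory c' \<xi> s) s - (c - G (trajectory c \<xi> s) s)"
      using assms(1) by simp
  qed (use assms(2) in \<open>auto simp: trajectory_0\<close>)
  then show ?thesis by simp
qed

lemma trajectory_K_ge: "\<xi> \<le> trajectory K \<xi> 1"
  and trajectory_neg_K_le: "trajectory (- K) \<xi> 1 \<le> \<xi>"
proof -
  have cont: "continuous_on {0..1} (trajectory c \<xi>)" for c
    using continuous_on_trajectory by (rule continuous_on_subset) auto
  have der: "(trajectory c \<xi> has_real_derivative c - G (trajectory c \<xi> t) t) (at t)"
    if "0 < t" "t < 1" for c t
    using has_real_derivative_trajectory_at that by simp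
  have "trajectory K \<xi> 0 \<le> trajectory K \<xi> 1"
  proof (rule DERIV_nonneg_imp_increasing_open[OF _ _ cont])
    fix t :: real assume "0 < t" "t < 1"
    then have "(trajectory K \<xi> has_real_derivative K - G (trajectory K \<xi> t) t) (at t)" by (rule der)
    moreover have "0 \<le> K - G (trajectory K \<xi> t) t" using bounded[of "trajectory K \<xi> t" t] by simp
    ultimately show "\<exists>y. (trajectory K \<xi> has_real_derivative y) (at t) \<and> 0 \<le> y" by blast
  qed simp
  then show "\<xi> \<le> trajectory K \<xi> 1" by (simp add: trajectory_0)
  have "trajectory (- K) \<xi> 1 \<le> trajectory (- K) \<xi> 0"
  proof (rule DERIV_nonpos_imp_decreasing_open[OF _ _ cont])
    fix t :: real assume "0 < t" "t < 1"
    then have "(trajectory (- K) \<xi> has_real_derivative - K - G (trajectory (- K) \<xi> t) t) (at t)"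
      by (rule der)
    moreover have "- K - G (trajectory (- K) \<xi> t) t \<le> 0"
      using bounded[of "trajectory (- K) \<xi> t" t] by simp
    ultimately show "\<exists>y. (trajectory (- K) \<xi> has_real_derivative y) (at t) \<and> y \<le> 0" by blast
  qed simp
  then show "trajectory (- K) \<xi> 1 \<le> \<xi>" by (simp add: trajectory_0)
qed

definition closing_constant :: "real \<Rightarrow> real" where
  "closing_constant \<xi> = (THE c. trajectory c \<xi> 1 = \<xi>)"

lemma closing_constant: "trajectory (closing_constant \<xi>) \<xi> 1 = \<xi>"
  and closing_constant_bound: "\<bar>closing_constant \<xi>\<bar> \<le> K"
proof -
  have "continuous_on {- K..K} (\<lambda>c. trajectory c \<xi> 1)"
    by (rule continuous_on_subset[OF continuous_on_trajectory_param(1)]) auto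
  moreover have "- K \<le> K" using K_nonneg by simp
  ultimately obtain c where c: "- K \<le> c" "c \<le> K" "trajectory c \<xi> 1 = \<xi>"
    using IVT'[of "\<lambda>c. trajectory c \<xi> 1", OF trajectory_neg_K_le trajectory_K_ge] by blast
  have "c' = c" if "trajectory c' \<xi> 1 = \<xi>" for c'
  proof (cases c c' rule: linorder_cases)
    case less
    then show ?thesis using trajectory_strict_mono[OF less, of 1 \<xi>] that c(3) by simp
  next
    case greater
    then show ?thesis using trajectory_strict_mono[OF greater, of 1 \<xi>] that c(3) by simp
  qed simp
  then have "closing_constant \<xi> = c"
    unfolding closing_constant_def using c(3) by (rule the_equality[rotated])
  with c show "trajectory (closing_constant \<xi>) \<xi> 1 = \<xi>" "\<bar>closing_constant \<xi>\<bar> \<le> K" by auto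
qed

lemma continuous_on_closing_constant: "continuous_on UNIV closing_constant"
proof (rule continuous_on_root_of_strict_mono[where P = "\<lambda>c \<xi>. trajectory c \<xi> 1 - \<xi>"])
  show "strict_mono (\<lambda>c. trajectory c \<xi> 1 - \<xi>)" for \<xi>
    by (rule strict_monoI) (simp add: trajectory_strict_mono)
  show "continuous_on UNIV (\<lambda>\<xi>. trajectory c \<xi> 1 - \<xi>)" for c
    by (intro continuous_intros continuous_on_trajectory_param) simp
qed (simp add: closing_constant)

definition trajectory_mean :: "real \<Rightarrow> real" where
  "trajectory_mean \<xi> = integral {0..1} (trajectory (closing_constant \<xi>) \<xi>)"

lemma integrable_trajectory: "trajectory c \<xi> integrable_on {0..1}"
  by (intro integrable_continuous_real continuous_on_subset[OF continuous_on_trajectory]) auto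

lemma trajectory_mean_dist_le:
  "\<bar>trajectory_mean \<xi> - trajectory_mean \<xi>'\<bar>
    \<le> (\<bar>\<xi> - \<xi>'\<bar> + 2 * \<bar>closing_constant \<xi> - closing_constant \<xi>'\<bar>) * exp (4 * L + 2)"
proof -
  define v where "v = trajectory (closing_constant \<xi>) \<xi>"
  define w where "w = trajectory (closing_constant \<xi>') \<xi>'"
  have "trajectory_mean \<xi> - trajectory_mean \<xi>' = integral {0..1} (\<lambda>t. v t - w t)"
    unfolding trajectory_mean_def v_def w_def
    by (rule integral_diff[symmetric]) (rule integrable_trajectory)+
  also have "norm \<dots>
      \<le> (\<bar>\<xi> - \<xi>'\<bar> + 2 * \<bar>closing_constant \<xi> - closing_constant \<xi>'\<bar>) * exp (4 * L + 2) * (1 - 0)"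
    unfolding v_def w_def
    by (intro integral_bound continuous_intros continuous_on_subset[OF continuous_on_trajectory])
       (auto intro: trajectory_dist_le)
  finally show ?thesis by simp
qed

lemma continuous_on_trajectory_mean: "continuous_on UNIV trajectory_mean"
proof -
  have "(trajectory_mean \<longlongrightarrow> trajectory_mean \<xi>) (at \<xi>)" for \<xi>
  proof -
    define B where
      "B \<xi>' = (\<bar>\<xi>' - \<xi>\<bar> + 2 * \<bar>closing_constant \<xi>' - closing_constant \<xi>\<bar>) * exp (4 * L + 2)"
      for \<xi>'
    have "(closing_constant \<longlongrightarrow> closing_constant \<xi>) (at \<xi>)"
      using continuous_on_closing_constant by (simp add: continuous_on_def)
    then have "(B \<longlongrightarrow> B \<xi>) (at \<xi>)" unfolding B_def by (intro tendsto_intros)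
    then have lim: "(B \<longlongrightarrow> 0) (at \<xi>)" by (simp add: B_def)
    have ev: "\<forall>\<^sub>F \<xi>' in at \<xi>. norm (trajectory_mean \<xi>' - trajectory_mean \<xi>) \<le> B \<xi>'"
      unfolding B_def by (intro always_eventually allI) (simp add: trajectory_mean_dist_le)
    from Lim_null_comparison[OF ev lim] show ?thesis by (simp add: LIM_zero_iff)
  qed
  then show ?thesis by (simp add: continuous_on_def)
qed

lemma trajectory_mean_bound: "\<bar>trajectory_mean \<xi> - \<xi>\<bar> \<le> 2 * K"
proof -
  define c where "c = closing_constant \<xi>"
  define v where "v = trajectory c \<xi>"
  have "\<bar>v t - \<xi>\<bar> \<le> 2 * K" if t: "t \<in> {0..1}" for t
  proof (cases "t = 0")
    case False
    have "\<exists>s\<in>{0<..<t}. v t - v 0 = (c - G (v s) s) * (t - 0)"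
      unfolding v_def
    proof (rule mvt_simple[where f' = "\<lambda>s h. (c - G (trajectory c \<xi> s) s) * h"])
      show "0 < t" using False t by simp
      fix s assume "0 \<le> s" "s \<le> t"
      then have "(trajectory c \<xi> has_real_derivative c - G (trajectory c \<xi> s) s)
          (at s within {0..t})"
        using t by (intro DERIV_subset[OF has_real_derivative_trajectory]) auto
      then show "(trajectory c \<xi> has_derivative (\<lambda>h. (c - G (trajectory c \<xi> s) s) * h))
          (at s within {0..t})"
        by (simp add: has_field_derivative_def)
    qed
    then obtain s where "v t - \<xi> = (c - G (v s) s) * t" by (auto simp: v_def trajectory_0)
    moreover have "\<bar>c - G (v s) s\<bar> \<le> 2 * K"
      using closing_constant_bound[of \<xi>] bounded[of "v s" s] by (simp add: c_def)
    ultimately have "\<bar>v t - \<xi>\<bar> = \<bar>c - G (v s) s\<bar> * t" using t by (simp add: abs_mult)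
    also have "\<dots> \<le> 2 * K * 1"
      using \<open>\<bar>c - G (v s) s\<bar> \<le> 2 * K\<close> t by (intro mult_mono) auto
    finally show ?thesis by simp
  qed (simp add: v_def trajectory_0 K_nonneg)
  then have "norm (integral {0..1} (\<lambda>t. v t - \<xi>)) \<le> 2 * K * (1 - 0)"
    unfolding v_def
    by (intro integral_bound continuous_intros continuous_on_subset[OF continuous_on_trajectory]) auto
  moreover have "integral {0..1} (\<lambda>t. v t - \<xi>) = trajectory_mean \<xi> - \<xi>"
    using integral_diff[OF integrable_trajectory integrable_const_ivl[of \<xi> 0 1]]
    by (simp add: trajectory_mean_def v_def c_def)
  ultimately show ?thesis by simp
qed

lemma exists_trajectory_mean_eq: "\<exists>\<xi>. trajectory_mean \<xi> = \<theta>"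
proof -
  have "trajectory_mean (\<theta> - 2 * K) \<le> \<theta>" "\<theta> \<le> trajectory_mean (\<theta> + 2 * K)"
    using trajectory_mean_bound[of "\<theta> - 2 * K"] trajectory_mean_bound[of "\<theta> + 2 * K"]
    by (simp_all add: abs_le_iff)
  moreover have "\<theta> - 2 * K \<le> \<theta> + 2 * K" using K_nonneg by simp
  moreover have "continuous_on {\<theta> - 2 * K..\<theta> + 2 * K} trajectory_mean"
    using continuous_on_trajectory_mean by (rule continuous_on_subset) simp
  ultimately obtain \<xi> where "trajectory_mean \<xi> = \<theta>" using IVT'[of trajectory_mean] by blast
  then show ?thesis ..
qed

lemma trajectory_closing_periodic:
  assumes "t \<in> {0..1}"
  shows "trajectory (closing_constant \<xi>) \<xi> (t + 1) = trajectory (closing_constant \<xi>) \<xi> t"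
proof (rule ode_solutions_unique[where f = "\<lambda>t u. closing_constant \<xi> - G u t" and T = 1 and L = L
      and v = "\<lambda>t. trajectory (closing_constant \<xi>) \<xi> (t + 1)"
      and w = "trajectory (closing_constant \<xi>) \<xi>"])
  let ?v = "trajectory (closing_constant \<xi>) \<xi>"
  show "continuous_on {0..1} (\<lambda>t. ?v (t + 1))"
    by (rule continuous_on_compose2[OF continuous_on_trajectory]) (auto intro: continuous_intros)
  show "continuous_on {0..1} ?v"
    by (rule continuous_on_subset[OF continuous_on_trajectory]) auto
  fix s :: real assume s: "s \<in> {0<..<1}"
  have "(?v has_real_derivative closing_constant \<xi> - G (?v (s + 1)) (s + 1)) (at (s + 1))"
    using s by (intro has_real_derivative_trajectory_at) auto
  then show "((\<lambda>t. ?v (t + 1)) has_real_derivative closing_constant \<xi> - G (?v (s + 1)) s) (at s)"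
    using DERIV_shift[of ?v _ s 1] by (simp add: periodic)
  show "(?v has_real_derivative closing_constant \<xi> - G (?v s) s) (at s)"
    using s by (intro has_real_derivative_trajectory_at) auto
next
  show "\<bar>(closing_constant \<xi> - G x t) - (closing_constant \<xi> - G y t)\<bar> \<le> L * \<bar>x - y\<bar>" for t x y
    using lipschitz[of y t x] by (simp add: abs_minus_commute)
qed (use assms L_nonneg closing_constant trajectory_0 in auto)

theorem exists_periodic_C2_solution:
  "\<exists>c F F1 F2. periodic_C2 F F1 F2 \<and> (\<forall>x. F2 x + G (\<theta> + F1 x) x = c)"
proof -
  obtain \<xi> where mean_\<xi>: "trajectory_mean \<xi> = \<theta>" using exists_trajectory_mean_eq by blast
  define c where "c = closing_constant \<xi>"
  define v where "v = trajectory c \<xi>"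
  have v_per: "v (t + 1) = v t" if "t \<in> {0..1}" for t
    using trajectory_closing_periodic[OF that] by (simp add: v_def c_def)
  have v_der: "(v has_real_derivative c - G (v t) t) (at t)" if "t \<in> {0<..<2}" for t
    using has_real_derivative_trajectory_at[OF that] by (simp add: v_def)
  have v_cont: "continuous_on {0..2} (\<lambda>s. v s - \<theta>)"
    unfolding v_def by (intro continuous_intros continuous_on_trajectory)
  have v_mean: "integral {0..1} (\<lambda>s. v s - \<theta>) = 0"
    using mean_\<xi> integral_diff[OF integrable_trajectory integrable_const_ivl[of \<theta> 0 1], of c \<xi>]
    by (simp add: trajectory_mean_def v_def c_def)
  define F1 where "F1 x = v (frac x) - \<theta>" for x
  define F2 where "F2 x = c - G (v (frac x)) x" for x
  have dv: "((\<lambda>x. v (frac x)) has_real_derivative F2 x) (at x)" for x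
  proof -
    have "((\<lambda>x. v (frac x)) has_real_derivative c - G (v (frac x)) (frac x)) (at x)"
      by (rule has_real_derivative_periodic_extension[OF v_per _ v_der])
         (use v_per in \<open>auto simp: periodic\<close>)
    then show ?thesis using periodic_frac[of "G (v (frac x))", OF periodic] by (simp add: F2_def)
  qed
  have "((\<lambda>x. integral {0..frac x} (\<lambda>s. v s - \<theta>)) has_real_derivative F1 x) (at x)" for x
    unfolding F1_def
    by (rule has_real_derivative_periodic_antiderivative[OF v_cont _ v_mean]) (simp add: v_per)
  moreover have "(F1 has_real_derivative F2 x) (at x)" for x
    using DERIV_diff[OF dv DERIV_const[of \<theta>]] by (simp add: F1_def[abs_def])
  moreover have "continuous_on UNIV F2"
    unfolding F2_def using has_real_derivative_imp_continuous_on[OF dv]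
    by (intro continuous_intros continuous_on_G_comp continuous_on_id)
  ultimately have "periodic_C2 (\<lambda>x. integral {0..frac x} (\<lambda>s. v s - \<theta>)) F1 F2"
    by (simp add: periodic_C2_def frac_1_eq)
  moreover have "F2 x + G (\<theta> + F1 x) x = c" for x by (simp add: F1_def F2_def)
  ultimately show ?thesis by blast
qed

end

section \<open>Truncation and the main theorem\<close>

lemma cell_constant_le:
  assumes "periodic_C2 F F1 F2" "\<forall>x. F2 x + H (\<theta> + F1 x) x = c"
    and "periodic_C2 E E1 E2" "\<forall>x. E2 x + H (\<theta> + E1 x) x = c'"
  shows "c \<le> c'"
proof -
  obtain x where "F1 x - E1 x = 0" "F2 x - E2 x \<le> 0"
    using periodic_C2_critical_point[OF periodic_C2_diff[OF assms(1,3)]] .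
  moreover have "c = F2 x + H (\<theta> + F1 x) x" "c' = E2 x + H (\<theta> + E1 x) x"
    using assms(2,4) by simp_all
  ultimately show ?thesis by simp
qed

lemma le_U_max:
  fixes H :: "real \<Rightarrow> real \<Rightarrow> real"
  assumes cont: "continuous_on UNIV (\<lambda>(p, x). H p x)" and per: "\<And>p x. H p (x + 1) = H p x"
  shows "H \<theta> x \<le> U_max H \<theta>"
proof -
  have "continuous_on {0..1} (H \<theta>)"
    using continuous_on_compose2[OF cont, of "{0..1}" "\<lambda>x. (\<theta>, x)"] by (simp add: continuous_intros)
  then have "bdd_above (H \<theta> ` {0..1})"
    by (intro bounded_imp_bdd_above compact_imp_bounded compact_continuous_image compact_Icc)
  moreover have "frac x \<in> {0..1}" using frac_lt_1[of x] by simp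
  ultimately have "H \<theta> (frac x) \<le> U_max H \<theta>"
    unfolding U_max_def by (intro cSUP_upper)
  then show ?thesis using periodic_frac[of "H \<theta>", OF per] by simp
qed

lemma sublevel_within_p_bounds:
  fixes H :: "real \<Rightarrow> real \<Rightarrow> real"
  assumes le_U: "\<And>x. H \<theta> x \<le> U_max H \<theta>"
    and bnd: "\<And>p x. H p x \<le> U_max H \<theta> \<Longrightarrow> \<bar>p\<bar> \<le> R"
    and x: "x \<in> {0..1}" and p: "H p x \<le> U_max H \<theta>"
  shows "p \<le> p_plus H \<theta>" and "p_minus H \<theta> \<le> p"
proof -
  define S where "S x = {p. H p x \<le> U_max H \<theta>}" for x
  have S_bounds: "- R \<le> q" "q \<le> R" if "q \<in> S y" for q y
    using bnd[of q y] that by (auto simp: S_def)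
  have "\<theta> \<in> S y" for y using le_U by (simp add: S_def)
  then have Sup_le: "Sup (S y) \<le> R" and Inf_ge: "- R \<le> Inf (S y)" for y
    using S_bounds by (blast intro: cSup_least cInf_greatest)+
  have "p \<le> Sup (S x)"
    using p S_bounds by (intro cSup_upper bdd_aboveI) (auto simp: S_def)
  also have "\<dots> \<le> Sup ((\<lambda>x. Sup (S x)) ` {0..1})"
    using x Sup_le by (intro cSUP_upper bdd_aboveI) auto
  finally show "p \<le> p_plus H \<theta>" by (simp add: p_plus_def S_def)
  have "Inf ((\<lambda>x. Inf (S x)) ` {0..1}) \<le> Inf (S x)"
    using x Inf_ge by (intro cINF_lower bdd_belowI) auto
  also have "\<dots> \<le> p"
    using p S_bounds by (intro cInf_lower bdd_belowI) (auto simp: S_def)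
  finally show "p_minus H \<theta> \<le> p" by (simp add: p_minus_def S_def)
qed

lemma bounded_lipschitz_hamiltonian_clamp:
  fixes H :: "real \<Rightarrow> real \<Rightarrow> real"
  assumes cont: "continuous_on UNIV (\<lambda>(p, x). H p x)" and per: "\<And>p x. H p (x + 1) = H p x"
    and lip: "L-lipschitz_on ({-R..R} \<times> UNIV) (\<lambda>(p, x). H p x)" and "0 \<le> R"
  shows "\<exists>K. bounded_lipschitz_hamiltonian (\<lambda>p x. H (clamp (- R) R p) x) K L"
proof -
  have clamp_in: "clamp (- R) R p \<in> {-R..R}" for p using \<open>0 \<le> R\<close> by (simp add: clamp_real)
  have "compact ((\<lambda>(p, x). H p x) ` ({-R..R} \<times> {0..1}))"
    by (intro compact_continuous_image continuous_on_subset[OF cont] compact_Times compact_Icc) auto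
  then obtain K where K: "\<And>p x. p \<in> {-R..R} \<Longrightarrow> x \<in> {0..1} \<Longrightarrow> \<bar>H p x\<bar> \<le> K"
    by (fastforce dest!: compact_imp_bounded simp: bounded_real)
  have "bounded_lipschitz_hamiltonian (\<lambda>p x. H (clamp (- R) R p) x) K L"
  proof
    have "continuous_on UNIV (\<lambda>z. (clamp (- R) R (fst z), snd z :: real))"
      using \<open>0 \<le> R\<close> by (simp add: clamp_real continuous_intros)
    from continuous_on_compose2[OF cont this]
    show "continuous_on UNIV (\<lambda>(p, x). H (clamp (- R) R p) x)" by (simp add: case_prod_unfold)
    show "\<bar>H (clamp (- R) R p) x\<bar> \<le> K" for p x
      using K[OF clamp_in, of "frac x"] frac_lt_1[of x] periodic_frac[of "H _", OF per] by simp
    show "\<bar>H (clamp (- R) R p) x - H (clamp (- R) R q) x\<bar> \<le> L * \<bar>p - q\<bar>" for p q x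
    proof -
      have "\<bar>H (clamp (- R) R p) x - H (clamp (- R) R q) x\<bar>
          \<le> L * \<bar>clamp (- R) R p - clamp (- R) R q\<bar>"
        using lipschitz_onD[OF lip, of "(clamp (- R) R p, x)" "(clamp (- R) R q, x)"] clamp_in
        by (simp add: dist_Pair_Pair dist_real_def)
      also have "\<dots> \<le> L * \<bar>p - q\<bar>"
        using dist_clamps_le_dist_args[of "- R" R p q] lipschitz_on_nonneg[OF lip]
        by (intro mult_left_mono) (simp_all add: dist_real_def)
      finally show ?thesis .
    qed
    show "H (clamp (- R) R p) (x + 1) = H (clamp (- R) R p) x" for p x by (rule per)
  qed
  then show ?thesis ..
qed

lemma clamp_eq_if_abs_less:
  assumes "\<bar>clamp (- R) R p\<bar> < R"
  shows "clamp (- R) R (p::real) = p"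
proof -
  have "0 < R" using assms abs_ge_zero[of "clamp (- R) R p"] by linarith
  then show ?thesis using assms by (auto simp: clamp_real)
qed

lemma truncated_solution_solves:
  fixes H :: "real \<Rightarrow> real \<Rightarrow> real"
  assumes cont: "continuous_on UNIV (\<lambda>(p, x). H p x)" and per: "\<And>p x. H p (x + 1) = H p x"
    and small: "\<And>p x. H p x \<le> U_max H \<theta> \<Longrightarrow> \<bar>p\<bar> < R"
    and sol: "periodic_C2 F F1 F2" "\<And>x. F2 x + H (clamp (- R) R (\<theta> + F1 x)) x = c"
  shows "\<forall>x. F2 x + H (\<theta> + F1 x) x = c"
    and "\<forall>x. p_minus H \<theta> \<le> \<theta> + F1 x \<and> \<theta> + F1 x \<le> p_plus H \<theta>"
proof -
  define U where "U = U_max H \<theta>"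
  have le_U: "H \<theta> x \<le> U" for x unfolding U_def by (rule le_U_max[OF cont per])
  have untruncated: "clamp (- R) R p = p \<and> H p x \<le> U" if "H (clamp (- R) R p) x \<le> U" for p x
    using small[of "clamp (- R) R p" x] that clamp_eq_if_abs_less[of R p] by (simp add: U_def)
  have "c \<le> U"
  proof -
    obtain x where "F1 x = 0" "F2 x \<le> 0" using periodic_C2_critical_point[OF sol(1)] .
    moreover have "\<bar>\<theta>\<bar> < R" using small le_U U_def by blast
    then have "clamp (- R) R \<theta> = \<theta>" by (simp add: clamp_real abs_less_iff)
    ultimately show ?thesis using sol(2)[of x] le_U[of x] by simp
  qed
  have extremal: "\<bar>\<theta> + F1 z\<bar> < R \<and> H (\<theta> + F1 z) z \<le> U" if "F2 z = 0" for z
    using untruncated[of "\<theta> + F1 z" z] sol(2)[of z] that \<open>c \<le> U\<close> small[of "\<theta> + F1 z" z]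
    by (simp add: U_def)
  obtain x0 x1 where x01: "x0 \<in> {0..1}" "x1 \<in> {0..1}" "\<And>x. F1 x1 \<le> F1 x \<and> F1 x \<le> F1 x0"
    and extremal0: "\<bar>\<theta> + F1 x0\<bar> < R \<and> H (\<theta> + F1 x0) x0 \<le> U"
    and extremal1: "\<bar>\<theta> + F1 x1\<bar> < R \<and> H (\<theta> + F1 x1) x1 \<le> U"
    using periodic_C2_deriv_extrema[OF sol(1)] extremal by metis
  show "\<forall>x. F2 x + H (\<theta> + F1 x) x = c"
  proof
    fix x
    have "\<bar>\<theta> + F1 x\<bar> < R" using extremal0 extremal1 x01(3)[of x] by linarith
    then have "clamp (- R) R (\<theta> + F1 x) = \<theta> + F1 x" by (simp add: clamp_real abs_less_iff)
    then show "F2 x + H (\<theta> + F1 x) x = c" using sol(2)[of x] by simp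
  qed
  have R: "\<And>p x. H p x \<le> U_max H \<theta> \<Longrightarrow> \<bar>p\<bar> \<le> R" using small by fastforce
  have "\<theta> + F1 x0 \<le> p_plus H \<theta>" "p_minus H \<theta> \<le> \<theta> + F1 x1"
    using sublevel_within_p_bounds[OF le_U[unfolded U_def] R] x01(1,2) extremal0 extremal1
    by (auto simp: U_def)
  then show "\<forall>x. p_minus H \<theta> \<le> \<theta> + F1 x \<and> \<theta> + F1 x \<le> p_plus H \<theta>"
    using x01(3) by (meson add_left_mono order_trans)
qed

theorem propositionC2:
  fixes H :: "real \<Rightarrow> real \<Rightarrow> real"
  assumes cont: "continuous_on UNIV (\<lambda>(p, x). H p x)"
    and coercive: "\<forall>M. \<exists>R. \<forall>p x. R \<le> \<bar>p\<bar> \<longrightarrow> M \<le> H p x"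
    and periodic: "\<forall>p x. H p (x + 1) = H p x"
    and lip: "\<forall>B>0. \<exists>L. L-lipschitz_on ({-B..B} \<times> UNIV) (\<lambda>(p, x). H p x)"
  shows "\<exists>c. (\<exists>F F1 F2. periodic_C2 F F1 F2 \<and>
                  (\<forall>x. F2 x + H (\<theta> + F1 x) x = c) \<and>
                  (\<forall>x. p_minus H \<theta> \<le> \<theta> + F1 x \<and> \<theta> + F1 x \<le> p_plus H \<theta>)) \<and>
             (\<forall>c'. (\<exists>F F1 F2. periodic_C2 F F1 F2 \<and>
                       (\<forall>x. F2 x + H (\<theta> + F1 x) x = c')) \<longrightarrow> c' = c)"
proof -
  have per: "\<And>p x. H p (x + 1) = H p x" using periodic by simp
  obtain R where R: "\<And>p x. R \<le> \<bar>p\<bar> \<Longrightarrow> U_max H \<theta> + 1 \<le> H p x" using coercive by blast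
  have small: "\<bar>p\<bar> < R" if "H p x \<le> U_max H \<theta>" for p x
    using R[of p x] that by linarith
  have "0 < R" using small[OF le_U_max[OF cont per, of \<theta> 0]] by linarith
  then obtain L where "L-lipschitz_on ({-R..R} \<times> UNIV) (\<lambda>(p, x). H p x)" using lip by blast
  then obtain K where "bounded_lipschitz_hamiltonian (\<lambda>p x. H (clamp (- R) R p) x) K L"
    using bounded_lipschitz_hamiltonian_clamp[OF cont per] \<open>0 < R\<close> by fastforce
  then obtain c F F1 F2
    where sol: "periodic_C2 F F1 F2" "\<And>x. F2 x + H (clamp (- R) R (\<theta> + F1 x)) x = c"
    by (metis bounded_lipschitz_hamiltonian.exists_periodic_C2_solution)
  have solves: "\<forall>x. F2 x + H (\<theta> + F1 x) x = c"
    by (rule truncated_solution_solves(1)[OF cont per _ sol], rule small)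
  have bounds: "\<forall>x. p_minus H \<theta> \<le> \<theta> + F1 x \<and> \<theta> + F1 x \<le> p_plus H \<theta>"
    by (rule truncated_solution_solves(2)[OF cont per _ sol], rule small)
  show ?thesis
  proof (rule exI[of _ c], intro conjI allI impI)
    show "\<exists>F F1 F2. periodic_C2 F F1 F2 \<and> (\<forall>x. F2 x + H (\<theta> + F1 x) x = c) \<and>
        (\<forall>x. p_minus H \<theta> \<le> \<theta> + F1 x \<and> \<theta> + F1 x \<le> p_plus H \<theta>)"
      using sol(1) solves bounds by blast
    fix c' assume "\<exists>F F1 F2. periodic_C2 F F1 F2 \<and> (\<forall>x. F2 x + H (\<theta> + F1 x) x = c')"
    then obtain E E1 E2 where E: "periodic_C2 E E1 E2" "\<forall>x. E2 x + H (\<theta> + E1 x) x = c'" by blast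
    have "c' \<le> c" by (rule cell_constant_le[OF E sol(1) solves])
    moreover have "c \<le> c'" by (rule cell_constant_le[OF sol(1) solves E])
    ultimately show "c' = c" by simp
  qed
qed

end
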